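(* Let $K$ be a field, $\mathcal P=(P,\preceq)$ a finite or countable locally finite poset and $\sim$ a bialgebra compatible equivalence relation on its nonempty intervals such that $\nabla([[a,x]]\otimes[[x,b]])=[[a,b]]$ for all $a\preceq x\preceq b$. Then the m-weak interval bialgebra $(L,\nabla,\eta;\Delta,\epsilon)$ is an m-weak Hopf algebra, and its antipode is $S=\widehat{\mu}$, where $\mu=\zeta^{\star-1}$ is the Möbius function, $\zeta$ is the constant function $1$ in the incidence algebra, and $\widehat\mu(I)=\mu(I)\,I$ for every class $I$.
   Context: Locally finite: all intervals $[a,b]$ are finite. $[[a,b]]$ is the $\sim$-class of $[a,b]$ and $L$ is the $K$-space with basis the classes. Bialgebra compatible: $[a,b]\sim[a',b']$, $[b,c]\sim[b',c']$ imply $[a,c]\sim[a',c']$; for $[a,b]\sim[a',b']$ there is a bijection $f:[a,b]\to[a',b']$ with $[a,x]\sim[a',f(x)]$, $[x,b]\sim[f(x),b']$; and $[a,a]\sim[b,b]$ for all $a,b$. On $L$: $\eta(r)=r[[a,a]]$; $\nabla(I\otimes J)=n_{I,J}[[a,b]]$ if there are $a\preceq x\preceq b$ with $I=[[a,x]]$, $J=[[x,b]]$ ($n_{I,J}$ the number of such $x$), else $0$; $\Delta([[a,b]])=\sum_{x\in[a,b]}[[a,x]]\otimes[[x,b]]$; $\epsilon([[a,b]])=\delta_{a,b}$. The incidence algebra consists of functions $\Phi$ from classes to $K$ with $(\Phi\star\Psi)([[a,b]])=\sum_{a\preceq x\preceq b}\Phi([[a,x]])\Psi([[x,b]])$ and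 unit $U([[a,b]])=\delta_{a,b}$. An m-weak bialgebra is an algebra $(L,\nabla,\eta)$ and coalgebra $(L,\Delta,\epsilon)$ with $\Delta\circ\eta=\eta\otimes\eta$, $\epsilon\circ\nabla=\epsilon\otimes\epsilon$, $\epsilon\circ\eta=\mathrm{id}_K$; it is an m-weak Hopf algebra if $\mathrm{id}_L$ has an inverse $S$ (the antipode) in the convolution algebra $(\mathrm{Hom}_K(L,L),\star,\eta\circ\epsilon)$, $f\star g=\nabla\circ(f\otimes g)\circ\Delta$. *)

theory Defs
  imports "HOL-Library.Countable_Set"
begin

definition supp :: "('i \<Rightarrow> 'k::zero) \<Rightarrow> 'i set" where
  "supp v = {i. v i \<noteq> 0}"

text \<open>The K-space with basis C: finitely supported functions C -> K.\<close>
definition fvec :: "'i set \<Rightarrow> ('i \<Rightarrow> 'k::zero) set" where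
  "fvec C = {v. finite (supp v) \<and> supp v \<subseteq> C}"

definition bas :: "'i \<Rightarrow> 'i \<Rightarrow> 'k::{zero,one}" where
  "bas i = (\<lambda>j. if j = i then 1 else 0)"

definition linext :: "('i \<Rightarrow> 'j \<Rightarrow> 'k::comm_ring_1) \<Rightarrow> ('i \<Rightarrow> 'k) \<Rightarrow> 'j \<Rightarrow> 'k" where
  "linext f v = (\<lambda>j. \<Sum>i\<in>supp v. v i * f i j)"

text \<open>Tensor product of vectors: the basis of V (x) W is indexed by pairs.\<close>
definition tens :: "('i \<Rightarrow> 'k::comm_ring_1) \<Rightarrow> ('j \<Rightarrow> 'k) \<Rightarrow> ('i \<times> 'j) \<Rightarrow> 'k" where
  "tens u v = (\<lambda>(i,j). u i * v j)"

definition tmap :: "(('i \<Rightarrow> 'k::comm_ring_1) \<Rightarrow> ('j \<Rightarrow> 'k)) \<Rightarrow> (('i2 \<Rightarrow> 'k) \<Rightarrow> ('j2 \<Rightarrow> 'k))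
    \<Rightarrow> ('i \<times> 'i2 \<Rightarrow> 'k) \<Rightarrow> ('j \<times> 'j2 \<Rightarrow> 'k)" where
  "tmap F G = linext (\<lambda>(i,j). tens (F (bas i)) (G (bas j)))"

definition assoc_r :: "(('i \<times> 'j) \<times> 'l \<Rightarrow> 'k) \<Rightarrow> ('i \<times> 'j \<times> 'l \<Rightarrow> 'k)" where
  "assoc_r w = (\<lambda>(x,y,z). w ((x,y),z))"

definition assoc_l :: "('i \<times> 'j \<times> 'l \<Rightarrow> 'k) \<Rightarrow> (('i \<times> 'j) \<times> 'l \<Rightarrow> 'k)" where
  "assoc_l w = (\<lambda>((x,y),z). w (x,y,z))"

definition lin_on :: "('i \<Rightarrow> 'k::comm_ring_1) set \<Rightarrow> ('j \<Rightarrow> 'k) set \<Rightarrow> (('i \<Rightarrow> 'k) \<Rightarrow> ('j \<Rightarrow> 'k)) \<Rightarrow> bool" where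
  "lin_on V W F \<longleftrightarrow> (\<forall>v\<in>V. F v \<in> W)
     \<and> (\<forall>u\<in>V. \<forall>v\<in>V. F (\<lambda>i. u i + v i) = (\<lambda>j. F u j + F v j))
     \<and> (\<forall>c. \<forall>v\<in>V. F (\<lambda>i. c * v i) = (\<lambda>j. c * F v j))"

definition lin_form :: "('i \<Rightarrow> 'k::comm_ring_1) set \<Rightarrow> (('i \<Rightarrow> 'k) \<Rightarrow> 'k) \<Rightarrow> bool" where
  "lin_form V E \<longleftrightarrow> (\<forall>u\<in>V. \<forall>v\<in>V. E (\<lambda>i. u i + v i) = E u + E v)
     \<and> (\<forall>c. \<forall>v\<in>V. E (\<lambda>i. c * v i) = c * E v)"

text \<open>L = fvec C. Maps: Nb : L(x)L -> L, Et : K -> L, Dl : L -> L(x)L, Ep : L -> K.\<close>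
definition mweak_bialgebra ::
  "'i set \<Rightarrow> (('i \<times> 'i \<Rightarrow> 'k::field) \<Rightarrow> ('i \<Rightarrow> 'k)) \<Rightarrow> ('k \<Rightarrow> ('i \<Rightarrow> 'k))
    \<Rightarrow> (('i \<Rightarrow> 'k) \<Rightarrow> ('i \<times> 'i \<Rightarrow> 'k)) \<Rightarrow> (('i \<Rightarrow> 'k) \<Rightarrow> 'k) \<Rightarrow> bool" where
  "mweak_bialgebra C Nb Et Dl Ep \<longleftrightarrow>
     \<comment> \<open>linearity of the structure maps\<close>
     lin_on (fvec (C \<times> C)) (fvec C) Nb
   \<and> (\<forall>r. Et r \<in> fvec C) \<and> (\<forall>r s. Et (r + s) = (\<lambda>i. Et r i + Et s i))
   \<and> (\<forall>r s. Et (r * s) = (\<lambda>i. r * Et s i))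
   \<and> lin_on (fvec C) (fvec (C \<times> C)) Dl
   \<and> lin_form (fvec C) Ep
     \<comment> \<open>algebra: associativity and unit\<close>
   \<and> (\<forall>t\<in>fvec (C \<times> C \<times> C). Nb (tmap Nb id (assoc_l t)) = Nb (tmap id Nb t))
   \<and> (\<forall>v\<in>fvec C. Nb (tens (Et 1) v) = v \<and> Nb (tens v (Et 1)) = v)
     \<comment> \<open>coalgebra: coassociativity and counit\<close>
   \<and> (\<forall>v\<in>fvec C. assoc_r (tmap Dl id (Dl v)) = tmap id Dl (Dl v))
   \<and> (\<forall>v\<in>fvec C. linext (\<lambda>(i,j) k. Ep (bas i) * bas j k) (Dl v) = v
                 \<and> linext (\<lambda>(i,j) k. Ep (bas j) * bas i k) (Dl v) = v)
     \<comment> \<open>weak compatibility conditions\<close>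
   \<and> (\<forall>r. Dl (Et r) = (\<lambda>p. r * tens (Et 1) (Et 1) p))
   \<and> (\<forall>w\<in>fvec (C \<times> C). Ep (Nb w) = (\<Sum>p\<in>supp w. w p * Ep (bas (fst p)) * Ep (bas (snd p))))
   \<and> (\<forall>r. Ep (Et r) = r)"

definition conv where
  "conv Nb Dl F G = (\<lambda>v. Nb (tmap F G (Dl v)))"

text \<open>S is an inverse of id_L in (Hom_K(L,L), *, Et o Ep); maps are compared on L.\<close>
definition is_antipode where
  "is_antipode C Nb Et Dl Ep S \<longleftrightarrow>
     lin_on (fvec C) (fvec C) S \<and>
     (\<forall>v\<in>fvec C. conv Nb Dl S id v = Et (Ep v) \<and> conv Nb Dl id S v = Et (Ep v))"

definition mweak_hopf where
  "mweak_hopf C Nb Et Dl Ep \<longleftrightarrow> mweak_bialgebra C Nb Et Dl Ep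
     \<and> (\<exists>S. is_antipode C Nb Et Dl Ep S)"

definition ipairs :: "('a::order \<times> 'a) set" where
  "ipairs = {(a,b). a \<le> b}"

definition locally_finite :: "'a::order itself \<Rightarrow> bool" where
  "locally_finite _ \<longleftrightarrow> (\<forall>a b :: 'a. finite {a..b})"

definition bialg_compatible :: "(('a::order \<times> 'a) \<times> ('a \<times> 'a)) set \<Rightarrow> bool" where
  "bialg_compatible R \<longleftrightarrow> equiv ipairs R
   \<and> (\<forall>a b c a' b' c'. ((a,b),(a',b')) \<in> R \<and> ((b,c),(b',c')) \<in> R \<longrightarrow> ((a,c),(a',c')) \<in> R)
   \<and> (\<forall>a b a' b'. ((a,b),(a',b')) \<in> R \<longrightarrow>
        (\<exists>f. bij_betw f {a..b} {a'..b'} \<and>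
             (\<forall>x\<in>{a..b}. ((a,x),(a',f x)) \<in> R \<and> ((x,b),(f x,b')) \<in> R)))
   \<and> (\<forall>a b. ((a,a),(b,b)) \<in> R)"

text \<open>The class [[a,b]] and the set of all classes (the basis of L).\<close>
definition cls :: "(('a \<times> 'a) \<times> ('a \<times> 'a)) set \<Rightarrow> 'a \<Rightarrow> 'a \<Rightarrow> ('a \<times> 'a) set" where
  "cls R a b = R `` {(a,b)}"

definition classes :: "(('a::order \<times> 'a) \<times> ('a \<times> 'a)) set \<Rightarrow> ('a \<times> 'a) set set" where
  "classes R = ipairs // R"

definition rep :: "('a \<times> 'a) set \<Rightarrow> 'a \<times> 'a" where
  "rep I = (SOME p. p \<in> I)"

definition eta_L :: "(('a::order \<times> 'a) \<times> ('a \<times> 'a)) set \<Rightarrow> 'k::field \<Rightarrow> ('a \<times> 'a) set \<Rightarrow> 'k" where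
  "eta_L R r = (\<lambda>I. r * bas (cls R (SOME a. True) (SOME a. True)) I)"

definition mul_b :: "(('a::order \<times> 'a) \<times> ('a \<times> 'a)) set \<Rightarrow> ('a \<times> 'a) set \<Rightarrow> ('a \<times> 'a) set
    \<Rightarrow> ('a \<times> 'a) set \<Rightarrow> 'k::field" where
  "mul_b R I J =
    (if \<exists>a x b. a \<le> x \<and> x \<le> b \<and> I = cls R a x \<and> J = cls R x b then
       (case (SOME (a,b). \<exists>x. a \<le> x \<and> x \<le> b \<and> I = cls R a x \<and> J = cls R x b) of (a,b) \<Rightarrow>
         (\<lambda>K. of_nat (card {x. a \<le> x \<and> x \<le> b \<and> I = cls R a x \<and> J = cls R x b}) * bas (cls R a b) K))
     else (\<lambda>K. 0))"

definition nabla_L :: "(('a::order \<times> 'a) \<times> ('a \<times> 'a)) set \<Rightarrow> (('a \<times> 'a) set \<times> ('a \<times> 'a) set \<Rightarrow> 'k::field)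
    \<Rightarrow> ('a \<times> 'a) set \<Rightarrow> 'k" where
  "nabla_L R = linext (\<lambda>(I,J). mul_b R I J)"

definition comul_b :: "(('a::order \<times> 'a) \<times> ('a \<times> 'a)) set \<Rightarrow> ('a \<times> 'a) set
    \<Rightarrow> ('a \<times> 'a) set \<times> ('a \<times> 'a) set \<Rightarrow> 'k::field" where
  "comul_b R I = (case rep I of (a,b) \<Rightarrow>
      (\<lambda>p. \<Sum>x\<in>{a..b}. bas (cls R a x, cls R x b) p))"

definition delta_L :: "(('a::order \<times> 'a) \<times> ('a \<times> 'a)) set \<Rightarrow> (('a \<times> 'a) set \<Rightarrow> 'k::field)
    \<Rightarrow> ('a \<times> 'a) set \<times> ('a \<times> 'a) set \<Rightarrow> 'k" where
  "delta_L R = linext (comul_b R)"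

definition delta_cls :: "('a \<times> 'a) set \<Rightarrow> 'k::field" where
  "delta_cls I = (case rep I of (a,b) \<Rightarrow> if a = b then 1 else 0)"

definition eps_L :: "(('a::order \<times> 'a) \<times> ('a \<times> 'a)) set \<Rightarrow> (('a \<times> 'a) set \<Rightarrow> 'k::field) \<Rightarrow> 'k" where
  "eps_L R v = (\<Sum>I\<in>supp v. v I * delta_cls I)"

definition inc_conv :: "(('a::order \<times> 'a) \<times> ('a \<times> 'a)) set \<Rightarrow> (('a \<times> 'a) set \<Rightarrow> 'k::field)
    \<Rightarrow> (('a \<times> 'a) set \<Rightarrow> 'k) \<Rightarrow> ('a \<times> 'a) set \<Rightarrow> 'k" where
  "inc_conv R \<Phi> \<Psi> = (\<lambda>I. case rep I of (a,b) \<Rightarrow>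
      \<Sum>x\<in>{x. a \<le> x \<and> x \<le> b}. \<Phi> (cls R a x) * \<Psi> (cls R x b))"

definition zeta :: "('a \<times> 'a) set \<Rightarrow> 'k::field" where
  "zeta = (\<lambda>I. 1)"

definition inc_unit :: "('a \<times> 'a) set \<Rightarrow> 'k::field" where
  "inc_unit = delta_cls"

definition mobius :: "(('a::order \<times> 'a) \<times> ('a \<times> 'a)) set \<Rightarrow> ('a \<times> 'a) set \<Rightarrow> 'k::field" where
  "mobius R = (THE \<Phi>. (\<forall>I. I \<notin> classes R \<longrightarrow> \<Phi> I = 0)
       \<and> (\<forall>I\<in>classes R. inc_conv R \<Phi> zeta I = inc_unit I \<and> inc_conv R zeta \<Phi> I = inc_unit I))"

definition hatmu :: "(('a::order \<times> 'a) \<times> ('a \<times> 'a)) set \<Rightarrow> (('a \<times> 'a) set \<Rightarrow> 'k::field) \<Rightarrow> ('a \<times> 'a) set \<Rightarrow> 'k" where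
  "hatmu R = linext (\<lambda>I J. mobius R I * bas I J)"

end

theory Submission
  imports Defs
begin

text \<open>
  Under the hypothesis the product concatenates intervals, \<open>[[a,x]] \<cdot> [[x,b]] = [[a,b]]\<close>, so
  on basis vectors every axiom becomes a statement about chains in one interval:
  (co)associativity splits \<open>a \<le> x \<le> y \<le> b\<close> in two ways, and
  \<open>(S \<star> id)[[a,b]] = (\<Sum>\<^sub>x \<mu>[[a,x]]) [[a,b]] = (\<mu> \<star> \<zeta>)[[a,b]] [[a,b]] = \<delta>\<^sub>a\<^sub>b [[a,b]]\<close>,
  and symmetrically for \<open>id \<star> S\<close> with \<open>\<zeta> \<star> \<mu> = \<delta>\<close>. All these formulas are independent of the
  chosen representatives because equivalent intervals are matched by bijections respecting
  the equivalence on subintervals. The Moebius function is computed on representatives by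
  the recursion \<open>\<mu>(a,b) = -\<Sum>\<^bsub>a\<le>x<b\<^esub> \<mu>(a,x)\<close>; it is invariant under the equivalence, and the left
  and right recursions give the same function.
\<close>

lemma supp_bas [simp]: "supp (bas i :: 'i \<Rightarrow> 'k::zero_neq_one) = {i}"
  by (auto simp: supp_def bas_def)

lemma linext_eq_sum:
  assumes "finite S" "supp v \<subseteq> S"
  shows "linext f v j = (\<Sum>i\<in>S. v i * f i j)"
  unfolding linext_def
  by (rule sum.mono_neutral_left) (use assms in \<open>auto simp: supp_def\<close>)

lemma linext_bas [simp]: "linext f (bas i :: 'i \<Rightarrow> 'k::comm_ring_1) = f i"
proof
  fix j
  have "linext f (bas i) j = (\<Sum>i'\<in>{i}. bas i i' * f i' j)"
    by (rule linext_eq_sum) (auto simp: supp_def bas_def)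
  then show "linext f (bas i) j = f i j" by (simp add: bas_def)
qed

lemma linext_bas_self:
  assumes "finite (supp v)"
  shows "linext bas v = (v :: 'i \<Rightarrow> 'k::comm_ring_1)"
proof
  fix j
  have "linext bas v j = (\<Sum>i\<in>supp v. if i = j then v j else 0)"
    unfolding linext_def bas_def by (intro sum.cong) auto
  also have "\<dots> = v j"
    using assms by (simp add: supp_def)
  finally show "linext bas v j = v j" .
qed

lemma supp_linext: "supp (linext f v) \<subseteq> (\<Union>i\<in>supp v. supp (f i))"
proof
  fix j assume "j \<in> supp (linext f v)"
  then have "(\<Sum>i\<in>supp v. v i * f i j) \<noteq> 0" by (simp add: supp_def linext_def)
  then obtain i where "i \<in> supp v" "v i * f i j \<noteq> 0"
    by (rule sum.not_neutral_contains_not_neutral)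
  then show "j \<in> (\<Union>i\<in>supp v. supp (f i))" by (auto simp: supp_def)
qed

lemma finite_supp_linext:
  "finite (supp v) \<Longrightarrow> (\<And>i. i \<in> supp v \<Longrightarrow> finite (supp (f i))) \<Longrightarrow> finite (supp (linext f v))"
  by (rule finite_subset[OF supp_linext]) auto

lemma linext_linext:
  assumes fv: "finite (supp v)" and ff: "\<And>i. i \<in> supp v \<Longrightarrow> finite (supp (f i))"
  shows "linext g (linext f v) = linext (\<lambda>i. linext g (f i)) v"
proof
  fix j
  define S where "S = (\<Union>i\<in>supp v. supp (f i))"
  have fS: "finite S" using fv ff by (auto simp: S_def)
  have "linext g (linext f v) j = (\<Sum>k\<in>S. linext f v k * g k j)"
    by (rule linext_eq_sum[OF fS]) (simp add: S_def supp_linext)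
  also have "\<dots> = (\<Sum>k\<in>S. \<Sum>i\<in>supp v. v i * (f i k * g k j))"
    by (simp add: linext_def sum_distrib_right mult.assoc)
  also have "\<dots> = (\<Sum>i\<in>supp v. v i * (\<Sum>k\<in>S. f i k * g k j))"
    by (subst sum.swap) (simp add: sum_distrib_left)
  also have "\<dots> = (\<Sum>i\<in>supp v. v i * linext g (f i) j)"
    by (intro sum.cong refl arg_cong[where f="\<lambda>x. _ * x"] linext_eq_sum[symmetric] fS)
       (auto simp: S_def)
  also have "\<dots> = linext (\<lambda>i. linext g (f i)) v j" by (simp add: linext_def)
  finally show "linext g (linext f v) j = linext (\<lambda>i. linext g (f i)) v j" .
qed

lemma linext_cong: "(\<And>i. i \<in> supp v \<Longrightarrow> f i = g i) \<Longrightarrow> linext f v = linext g v"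
  by (auto simp: linext_def intro!: sum.cong)

lemma linext_zero [simp]: "linext f (\<lambda>_. 0) = (\<lambda>_. 0)"
  by (simp add: linext_def supp_def)

lemma linext_add:
  fixes u v :: "'i \<Rightarrow> 'k::comm_ring_1"
  assumes "finite (supp u)" "finite (supp v)"
  shows "linext f (\<lambda>i. u i + v i) = (\<lambda>j. linext f u j + linext f v j)"
proof
  fix j
  let ?S = "supp u \<union> supp v"
  have "supp (\<lambda>i. u i + v i) \<subseteq> ?S" by (auto simp: supp_def)
  then have "linext f (\<lambda>i. u i + v i) j = (\<Sum>i\<in>?S. (u i + v i) * f i j)"
    using assms by (intro linext_eq_sum) auto
  also have "\<dots> = (\<Sum>i\<in>?S. u i * f i j) + (\<Sum>i\<in>?S. v i * f i j)"
    by (simp add: distrib_right sum.distrib)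
  also have "\<dots> = linext f u j + linext f v j"
    using assms by (simp add: linext_eq_sum[of ?S u] linext_eq_sum[of ?S v])
  finally show "linext f (\<lambda>i. u i + v i) j = linext f u j + linext f v j" .
qed

lemma linext_smult:
  fixes v :: "'i \<Rightarrow> 'k::comm_ring_1"
  assumes "finite (supp v)"
  shows "linext f (\<lambda>i. c * v i) = (\<lambda>j. c * linext f v j)"
proof
  fix j
  have "linext f (\<lambda>i. c * v i) j = (\<Sum>i\<in>supp v. (c * v i) * f i j)"
    using assms by (intro linext_eq_sum) (auto simp: supp_def)
  also have "\<dots> = c * linext f v j" by (simp add: linext_def sum_distrib_left mult.assoc)
  finally show "linext f (\<lambda>i. c * v i) j = c * linext f v j" .
qed

lemma lin_on_linext:
  fixes f :: "'i \<Rightarrow> 'j \<Rightarrow> 'k::comm_ring_1"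
  assumes "\<And>i. i \<in> C \<Longrightarrow> f i \<in> fvec D"
  shows "lin_on (fvec C) (fvec D) (linext f)"
  unfolding lin_on_def
proof (intro conjI ballI allI)
  fix v :: "'i \<Rightarrow> 'k" assume v: "v \<in> fvec C"
  have "supp (linext f v) \<subseteq> D"
    using supp_linext[of f v] v assms by (force simp: fvec_def)
  then show "linext f v \<in> fvec D"
    using v assms by (auto simp: fvec_def intro!: finite_supp_linext)
next
  fix u v :: "'i \<Rightarrow> 'k" assume "u \<in> fvec C" "v \<in> fvec C"
  then show "linext f (\<lambda>i. u i + v i) = (\<lambda>j. linext f u j + linext f v j)"
    by (intro linext_add) (auto simp: fvec_def)
next
  fix c :: 'k and v :: "'i \<Rightarrow> 'k" assume "v \<in> fvec C"
  then show "linext f (\<lambda>i. c * v i) = (\<lambda>j. c * linext f v j)"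
    by (intro linext_smult) (auto simp: fvec_def)
qed

lemma supp_sum_subset: "supp (\<lambda>p. \<Sum>x\<in>X. g x p) \<subseteq> (\<Union>x\<in>X. supp (g x))"
proof
  fix p assume "p \<in> supp (\<lambda>p. \<Sum>x\<in>X. g x p)"
  then have "(\<Sum>x\<in>X. g x p) \<noteq> 0" by (simp add: supp_def)
  then obtain x where "x \<in> X" "g x p \<noteq> 0" by (rule sum.not_neutral_contains_not_neutral)
  then show "p \<in> (\<Union>x\<in>X. supp (g x))" by (auto simp: supp_def)
qed

lemma finite_supp_sum_bas:
  "finite X \<Longrightarrow> finite (supp (\<lambda>q. \<Sum>x\<in>X. (c x :: 'k::comm_ring_1) * bas (h x) q))"
  by (rule finite_subset[OF supp_sum_subset]) (auto simp: supp_def bas_def)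

lemma linext_sum:
  fixes g :: "_ \<Rightarrow> _ \<Rightarrow> 'k::comm_ring_1"
  assumes "finite X" "\<And>x. x \<in> X \<Longrightarrow> finite (supp (g x))"
  shows "linext f (\<lambda>p. \<Sum>x\<in>X. g x p) = (\<lambda>q. \<Sum>x\<in>X. linext f (g x) q)"
  using assms
proof (induction X rule: finite_induct)
  case empty
  then show ?case by simp
next
  case (insert x X)
  have "finite (supp (\<lambda>p. \<Sum>y\<in>X. g y p))"
    using insert by (intro finite_subset[OF supp_sum_subset]) auto
  then show ?case
    using linext_add[of "g x" "\<lambda>p. \<Sum>y\<in>X. g y p" f] insert by simp
qed

lemma linext_sum_bas:
  assumes "finite X"
  shows "linext f (\<lambda>p. \<Sum>x\<in>X. c x * bas (h x) p) = (\<lambda>q. \<Sum>x\<in>X. c x * f (h x) q)"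
proof -
  have "finite (supp (\<lambda>p. c x * bas (h x) p))" for x
    by (rule finite_subset[of _ "{h x}"]) (auto simp: supp_def bas_def)
  then show ?thesis
    using assms by (simp add: linext_sum linext_smult)
qed

lemma linext_sum_bas1:
  assumes "finite X"
  shows "linext f (\<lambda>p. \<Sum>x\<in>X. bas (h x) p) = (\<lambda>q. \<Sum>x\<in>X. f (h x) q)"
  using linext_sum_bas[OF assms, where c="\<lambda>_. 1" and f=f and h=h] by simp

lemma tens_bas_bas [simp]: "tens (bas i) (bas j) = (bas (i,j) :: _ \<Rightarrow> 'k::comm_ring_1)"
  by (auto simp: tens_def bas_def)

lemma tens_zero_left [simp]: "tens (\<lambda>_. 0) v = (\<lambda>_. 0)"
  by (auto simp: tens_def)

lemma tens_smult_bas_left: "tens (\<lambda>i. c * bas a i) (bas b) = (\<lambda>q. c * bas (a,b) q)"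
  by (auto simp: tens_def bas_def)

lemma tens_smult_bas_right: "tens (bas a) (\<lambda>i. c * bas b i) = (\<lambda>q. c * bas (a,b) q)"
  by (auto simp: tens_def bas_def)

lemma tens_sum_bas_left:
  "tens (\<lambda>p. \<Sum>x\<in>X. bas (h x) p) (bas b) = (\<lambda>q. \<Sum>x\<in>X. bas (h x, b) q)"
  by (auto simp: tens_def bas_def sum_distrib_right intro!: sum.cong)

lemma tens_sum_bas_right:
  "tens (bas a) (\<lambda>p. \<Sum>x\<in>X. bas (h x) p) = (\<lambda>q. \<Sum>x\<in>X. bas (a, h x) q)"
  by (auto simp: tens_def bas_def sum_distrib_left intro!: sum.cong)

lemma finite_supp_tens: "finite (supp u) \<Longrightarrow> finite (supp v) \<Longrightarrow> finite (supp (tens u v))"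
  by (rule finite_subset[of _ "supp u \<times> supp v"]) (auto simp: supp_def tens_def)

lemma tens_bas_left_eq_linext:
  fixes v :: "'b \<Rightarrow> 'k::comm_ring_1"
  assumes "finite (supp v)"
  shows "tens (bas e) v = linext (\<lambda>j. bas (e,j)) v"
proof
  fix q :: "'a \<times> 'b"
  obtain i j where q: "q = (i,j)" by force
  have "linext (\<lambda>j. bas (e,j)) v q = (\<Sum>j'\<in>supp v. if j' = j then (if i = e then v j else 0) else 0)"
    unfolding linext_def q by (intro sum.cong) (auto simp: bas_def)
  also have "\<dots> = tens (bas e) v q"
    using assms by (auto simp: q tens_def bas_def supp_def)
  finally show "tens (bas e) v q = linext (\<lambda>j. bas (e,j)) v q" ..
qed

lemma tens_bas_right_eq_linext:
  fixes v :: "'b \<Rightarrow> 'k::comm_ring_1"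
  assumes "finite (supp v)"
  shows "tens v (bas e) = linext (\<lambda>j. bas (j,e)) v"
proof
  fix q :: "'b \<times> 'a"
  obtain i j where q: "q = (i,j)" by force
  have "linext (\<lambda>j. bas (j,e)) v q = (\<Sum>j'\<in>supp v. if j' = i then (if j = e then v i else 0) else 0)"
    unfolding linext_def q by (intro sum.cong) (auto simp: bas_def)
  also have "\<dots> = tens v (bas e) q"
    using assms by (auto simp: q tens_def bas_def supp_def)
  finally show "tens v (bas e) q = linext (\<lambda>j. bas (j,e)) v q" ..
qed

lemma assoc_l_eq_linext:
  fixes t :: "'a \<times> 'b \<times> 'c \<Rightarrow> 'k::comm_ring_1"
  assumes "finite (supp t)"
  shows "assoc_l t = linext (\<lambda>(x,y,z). bas ((x,y),z)) t"
proof
  fix q :: "('a \<times> 'b) \<times> 'c"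
  obtain x y z where q: "q = ((x,y),z)" by (metis prod.collapse)
  have "linext (\<lambda>(x,y,z). bas ((x,y),z)) t q = (\<Sum>p\<in>supp t. if p = (x,y,z) then t (x,y,z) else 0)"
    unfolding linext_def q by (intro sum.cong) (auto simp: bas_def split: prod.splits)
  also have "\<dots> = assoc_l t q"
    using assms by (auto simp: q assoc_l_def supp_def)
  finally show "assoc_l t q = linext (\<lambda>(x,y,z). bas ((x,y),z)) t q" ..
qed

lemma assoc_r_linext: "assoc_r (linext f v) = linext (\<lambda>i. assoc_r (f i)) v"
  by (auto simp: assoc_r_def linext_def)

section \<open>The Moebius function of a locally finite order\<close>

text \<open>
  Recursion with fuel: each recursive call shrinks the interval, so any fuel of at least
  \<open>card {a..b}\<close> gives the same value.
\<close>

primrec mobius_left_fuel :: "nat \<Rightarrow> 'a::order \<Rightarrow> 'a \<Rightarrow> 'k::field" where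
  "mobius_left_fuel 0 a b = 0"
| "mobius_left_fuel (Suc n) a b =
     (if a = b then 1 else - (\<Sum>x\<in>{a..<b}. mobius_left_fuel n a x))"

primrec mobius_right_fuel :: "nat \<Rightarrow> 'a::order \<Rightarrow> 'a \<Rightarrow> 'k::field" where
  "mobius_right_fuel 0 a b = 0"
| "mobius_right_fuel (Suc n) a b =
     (if a = b then 1 else - (\<Sum>x\<in>{a<..b}. mobius_right_fuel n x b))"

definition mobius_left :: "'a::order \<Rightarrow> 'a \<Rightarrow> 'k::field" where
  "mobius_left a b = mobius_left_fuel (card {a..b}) a b"

definition mobius_right :: "'a::order \<Rightarrow> 'a \<Rightarrow> 'k::field" where
  "mobius_right a b = mobius_right_fuel (card {a..b}) a b"

context
  assumes locally_finite: "locally_finite TYPE('a::order)"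
begin

lemma locally_finite_atLeastAtMost [simp]: "finite {a..b::'a}"
  using locally_finite by (simp add: locally_finite_def)

lemma locally_finite_atLeastLessThan [simp]: "finite {a..<b::'a}"
  and locally_finite_greaterThanAtMost [simp]: "finite {a<..b::'a}"
  by (rule finite_subset[OF _ locally_finite_atLeastAtMost[of a b]], auto)+

lemma card_atLeastAtMost_less_upper: "a \<le> x \<Longrightarrow> x < b \<Longrightarrow> card {a..x} < card {a..b::'a}"
  by (rule psubset_card_mono) (auto intro: order.trans[OF _ less_imp_le])

lemma card_atLeastAtMost_less_lower: "a < x \<Longrightarrow> x \<le> b \<Longrightarrow> card {x..b} < card {a..b::'a}"
  by (rule psubset_card_mono) (auto intro: order.trans[OF less_imp_le])

lemma card_atLeastAtMost_pos: "a \<le> b \<Longrightarrow> card {a..b::'a} > 0"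
  by (auto simp: card_gt_0_iff)

lemma mobius_left_fuel_stable:
  "a \<le> b \<Longrightarrow> card {a..b::'a} \<le> n \<Longrightarrow> card {a..b} \<le> m \<Longrightarrow>
    (mobius_left_fuel n a b :: 'k::field) = mobius_left_fuel m a b"
proof (induction n arbitrary: m b)
  case 0
  then show ?case using card_atLeastAtMost_pos[of a b] by simp
next
  case (Suc n)
  obtain m' where m: "m = Suc m'" using Suc.prems card_atLeastAtMost_pos[of a b] by (cases m) auto
  have "(\<Sum>x\<in>{a..<b}. (mobius_left_fuel n a x :: 'k)) = (\<Sum>x\<in>{a..<b}. mobius_left_fuel m' a x)"
    using Suc card_atLeastAtMost_less_upper m by (intro sum.cong refl Suc.IH) fastforce+
  then show ?case by (simp add: m)
qed

lemma mobius_right_fuel_stable: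
  "a \<le> b \<Longrightarrow> card {a..b::'a} \<le> n \<Longrightarrow> card {a..b} \<le> m \<Longrightarrow>
    (mobius_right_fuel n a b :: 'k::field) = mobius_right_fuel m a b"
proof (induction n arbitrary: m a)
  case 0
  then show ?case using card_atLeastAtMost_pos[of a b] by simp
next
  case (Suc n)
  obtain m' where m: "m = Suc m'" using Suc.prems card_atLeastAtMost_pos[of a b] by (cases m) auto
  have "(\<Sum>x\<in>{a<..b}. (mobius_right_fuel n x b :: 'k)) = (\<Sum>x\<in>{a<..b}. mobius_right_fuel m' x b)"
    using Suc card_atLeastAtMost_less_lower m by (intro sum.cong refl Suc.IH) fastforce+
  then show ?case by (simp add: m)
qed

lemma mobius_left_rec:
  assumes "a \<le> b"
  shows "(mobius_left a b :: 'k::field) = (if a = b then 1 else - (\<Sum>x\<in>{a..<b::'a}. mobius_left a x))"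
proof -
  obtain k where k: "card {a..b} = Suc k"
    using card_atLeastAtMost_pos[OF assms] by (cases "card {a..b}") auto
  have "(\<Sum>x\<in>{a..<b}. (mobius_left_fuel k a x :: 'k)) = (\<Sum>x\<in>{a..<b}. mobius_left a x)"
    unfolding mobius_left_def using card_atLeastAtMost_less_upper k
    by (intro sum.cong refl mobius_left_fuel_stable) fastforce+
  then show ?thesis by (simp add: mobius_left_def k)
qed

lemma mobius_right_rec:
  assumes "a \<le> b"
  shows "(mobius_right a b :: 'k::field) = (if a = b then 1 else - (\<Sum>x\<in>{a<..b::'a}. mobius_right x b))"
proof -
  obtain k where k: "card {a..b} = Suc k"
    using card_atLeastAtMost_pos[OF assms] by (cases "card {a..b}") auto
  have "(\<Sum>x\<in>{a<..b}. (mobius_right_fuel k x b :: 'k)) = (\<Sum>x\<in>{a<..b}. mobius_right x b)"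
    unfolding mobius_right_def using card_atLeastAtMost_less_lower k
    by (intro sum.cong refl mobius_right_fuel_stable) fastforce+
  then show ?thesis by (simp add: mobius_right_def k)
qed

lemma sum_mobius_left:
  assumes "a \<le> b"
  shows "(\<Sum>x\<in>{a..b::'a}. (mobius_left a x :: 'k::field)) = (if a = b then 1 else 0)"
proof -
  have "{a..b} = insert b {a..<b}" using assms by auto
  then show ?thesis using mobius_left_rec[OF assms] by auto
qed

lemma sum_mobius_right:
  assumes "a \<le> b"
  shows "(\<Sum>x\<in>{a..b::'a}. (mobius_right x b :: 'k::field)) = (if a = b then 1 else 0)"
proof -
  have "{a..b} = insert a {a<..b}" using assms by auto
  then show ?thesis using mobius_right_rec[OF assms] by auto
qed

text \<open>A left inverse of \<open>\<zeta>\<close> equals a right inverse: expand \<open>\<mu>\<^sub>L \<star> \<zeta> \<star> \<mu>\<^sub>R\<close> both ways.\<close>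

lemma mobius_left_eq_right:
  assumes "a \<le> b"
  shows "(mobius_left a b :: 'k::field) = mobius_right a (b::'a)"
proof -
  have "(mobius_left a b :: 'k) = (\<Sum>x\<in>{a..b}. mobius_left a x * (if x = b then 1 else 0))"
    using assms by (simp add: if_distrib cong: if_cong)
  also have "\<dots> = (\<Sum>x\<in>{a..b}. mobius_left a x * (\<Sum>y\<in>{x..b}. mobius_right y b))"
    by (intro sum.cong refl) (simp add: sum_mobius_right)
  also have "\<dots> = (\<Sum>x\<in>{a..b}. \<Sum>y\<in>{y\<in>{a..b}. x \<le> y}. mobius_left a x * mobius_right y b)"
    by (intro sum.cong refl) (auto simp: sum_distrib_left intro!: sum.cong)
  also have "\<dots> = (\<Sum>y\<in>{a..b}. \<Sum>x\<in>{x\<in>{a..b}. x \<le> y}. mobius_left a x * mobius_right y b)"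
    by (rule sum.swap_restrict) auto
  also have "\<dots> = (\<Sum>y\<in>{a..b}. (if a = y then 1 else 0) * mobius_right y b)"
    by (intro sum.cong refl)
       (auto simp: sum_mobius_left[symmetric] sum_distrib_right intro!: sum.cong)
  also have "\<dots> = (\<Sum>y\<in>{a..b}. if a = y then mobius_right y b else 0)"
    by (intro sum.cong) auto
  also have "\<dots> = mobius_right a b" using assms by simp
  finally show ?thesis .
qed

end

locale compatible_intervals =
  fixes R :: "(('a::order \<times> 'a) \<times> ('a \<times> 'a)) set"
  assumes locally_finite: "locally_finite TYPE('a)"
    and compatible: "bialg_compatible R"
begin

lemmas finite_intervals [simp] =
  locally_finite_atLeastAtMost[OF locally_finite]
  locally_finite_atLeastLessThan[OF locally_finite]
  locally_finite_greaterThanAtMost[OF locally_finite]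

lemma equiv_R: "equiv ipairs R"
  using compatible by (simp add: bialg_compatible_def)

lemma R_le: "((a,b),(c,d)) \<in> R \<Longrightarrow> a \<le> b \<and> c \<le> d"
  using equiv_R by (auto simp: equiv_def refl_on_def ipairs_def)

lemma R_refl: "a \<le> b \<Longrightarrow> ((a,b),(a,b)) \<in> R"
  using equiv_R by (auto simp: equiv_def refl_on_def ipairs_def)

lemma R_sym: "(p,q) \<in> R \<Longrightarrow> (q,p) \<in> R"
  using equiv_R by (meson equivE symD)

lemma R_degenerate: "((a,a),(b,b)) \<in> R"
  using compatible by (simp add: bialg_compatible_def)

lemma R_interval_bij:
  assumes r: "((a,b),(a',b')) \<in> R"
  obtains f where "bij_betw f {a..b} {a'..b'}"
    and "\<forall>x\<in>{a..b}. ((a,x),(a',f x)) \<in> R \<and> ((x,b),(f x,b')) \<in> R"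
  using compatible r unfolding bialg_compatible_def by blast

lemma R_degenerate_imp_degenerate: "((a,a),(c,d)) \<in> R \<Longrightarrow> c = d"
proof -
  assume r: "((a,a),(c,d)) \<in> R"
  then obtain f where "bij_betw f {a..a} {c..d}" by (rule R_interval_bij)
  then have "{c..d} = {f a}" by (simp add: bij_betw_def)
  then show "c = d" using R_le[OF r] by (metis atLeastAtMost_singleton_iff)
qed

lemma R_degenerate_iff: "((a,b),(c,d)) \<in> R \<Longrightarrow> a = b \<longleftrightarrow> c = d"
  using R_degenerate_imp_degenerate R_sym by blast

lemma R_interval_bij_ends:
  assumes r: "((a,b),(a',b')) \<in> R"
  obtains f where "bij_betw f {a..b} {a'..b'}"
    and "\<forall>x\<in>{a..b}. ((a,x),(a',f x)) \<in> R \<and> ((x,b),(f x,b')) \<in> R"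
    and "f a = a'" and "f b = b'"
proof -
  obtain f where f: "bij_betw f {a..b} {a'..b'}"
    "\<forall>x\<in>{a..b}. ((a,x),(a',f x)) \<in> R \<and> ((x,b),(f x,b')) \<in> R"
    using r by (rule R_interval_bij)
  have "a \<le> b" using R_le[OF r] by simp
  then have "((a,a),(a',f a)) \<in> R" "((b,b),(f b,b')) \<in> R" using f(2) by auto
  then have "f a = a'" "f b = b'" using R_degenerate_imp_degenerate R_sym by metis+
  with f that show ?thesis by blast
qed

lemma cls_eqI: "((a,b),(c,d)) \<in> R \<Longrightarrow> cls R a b = cls R c d"
  unfolding cls_def using equiv_R by (rule equiv_class_eq)

lemma cls_eqD: "a \<le> b \<Longrightarrow> cls R a b = cls R c d \<Longrightarrow> ((a,b),(c,d)) \<in> R"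
  using R_refl[of a b] by (auto simp: cls_def intro: R_sym)

lemma cls_degenerate: "cls R a a = cls R c c"
  by (rule cls_eqI[OF R_degenerate])

lemma cls_in_classes: "a \<le> b \<Longrightarrow> cls R a b \<in> classes R"
  unfolding cls_def classes_def by (rule quotientI) (simp add: ipairs_def)

lemma classesE:
  assumes "I \<in> classes R"
  obtains a b where "a \<le> b" "I = cls R a b"
  using assms unfolding classes_def cls_def ipairs_def by (auto elim!: quotientE)

lemma rep_cls:
  assumes "a \<le> b"
  obtains a' b' where "rep (cls R a b) = (a',b')" "((a,b),(a',b')) \<in> R"
proof -
  have "(a,b) \<in> cls R a b" using R_refl[OF assms] by (simp add: cls_def)
  then have "rep (cls R a b) \<in> cls R a b" unfolding rep_def by (rule someI)
  then show ?thesis using that by (metis Image_singleton_iff cls_def surj_pair)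
qed

lemma sum_interval_R_invariant:
  assumes r: "((a,b),(a',b')) \<in> R"
  shows "(\<Sum>x\<in>{a..b}. g (cls R a x) (cls R x b)) = (\<Sum>y\<in>{a'..b'}. g (cls R a' y) (cls R y b'))"
proof -
  obtain f where f: "bij_betw f {a..b} {a'..b'}"
    "\<forall>x\<in>{a..b}. ((a,x),(a',f x)) \<in> R \<and> ((x,b),(f x,b')) \<in> R"
    using r by (rule R_interval_bij)
  have "(\<Sum>x\<in>{a..b}. g (cls R a x) (cls R x b)) = (\<Sum>x\<in>{a..b}. g (cls R a' (f x)) (cls R (f x) b'))"
    using f(2) by (intro sum.cong refl) (metis cls_eqI)
  also have "\<dots> = (\<Sum>y\<in>{a'..b'}. g (cls R a' y) (cls R y b'))"
    by (rule sum.reindex_bij_betw[OF f(1)])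
  finally show ?thesis .
qed

lemma cls_split_transport:
  assumes eq: "cls R a y = cls R a' y'" and "a \<le> x" "x \<le> y"
  obtains x' where "a' \<le> x'" "x' \<le> y'" "cls R a x = cls R a' x'" "cls R x y = cls R x' y'"
proof -
  have "((a,y),(a',y')) \<in> R" using cls_eqD[OF _ eq] assms(2,3) by (meson order.trans)
  then obtain f where "\<forall>z\<in>{a..y}. ((a,z),(a',f z)) \<in> R \<and> ((z,y),(f z,y')) \<in> R"
    by (rule R_interval_bij)
  then have r1: "((a,x),(a',f x)) \<in> R" and r2: "((x,y),(f x,y')) \<in> R" using assms(2,3) by auto
  show ?thesis
    using that[of "f x"] R_le[OF r1] R_le[OF r2] cls_eqI[OF r1] cls_eqI[OF r2] by blast
qed

lemma delta_cls_cls: "a \<le> b \<Longrightarrow> (delta_cls (cls R a b) :: 'k::field) = (if a = b then 1 else 0)"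
  by (erule rep_cls) (auto simp: delta_cls_def R_degenerate_iff)

lemma inc_conv_cls:
  assumes "a \<le> b"
  shows "inc_conv R \<Phi> \<Psi> (cls R a b) = (\<Sum>x\<in>{a..b}. \<Phi> (cls R a x) * \<Psi> (cls R x b))"
proof -
  obtain a' b' where r: "rep (cls R a b) = (a',b')" "((a,b),(a',b')) \<in> R"
    using assms by (rule rep_cls)
  have "{x. a' \<le> x \<and> x \<le> b'} = {a'..b'}" by auto
  then show ?thesis
    unfolding inc_conv_def r(1)
    using sum_interval_R_invariant[OF r(2), of "\<lambda>I J. \<Phi> I * \<Psi> J"] by simp
qed

lemma comul_b_cls:
  assumes "a \<le> b"
  shows "(comul_b R (cls R a b) :: _ \<Rightarrow> 'k::field) = (\<lambda>p. \<Sum>x\<in>{a..b}. bas (cls R a x, cls R x b) p)"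
proof
  fix p
  obtain a' b' where r: "rep (cls R a b) = (a',b')" "((a,b),(a',b')) \<in> R"
    using assms by (rule rep_cls)
  show "(comul_b R (cls R a b) p :: 'k) = (\<Sum>x\<in>{a..b}. bas (cls R a x, cls R x b) p)"
    unfolding comul_b_def r(1) using sum_interval_R_invariant[OF r(2), of "\<lambda>I J. bas (I,J) p", symmetric]
    by simp
qed

lemma mobius_left_R_invariant:
  "((a,b),(a',b')) \<in> R \<Longrightarrow> (mobius_left a b :: 'k::field) = mobius_left a' b'"
proof (induction "card {a..b}" arbitrary: a b a' b' rule: less_induct)
  case less
  obtain f where f: "bij_betw f {a..b} {a'..b'}"
    "\<forall>x\<in>{a..b}. ((a,x),(a',f x)) \<in> R \<and> ((x,b),(f x,b')) \<in> R"
    "f a = a'" "f b = b'"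
    using less.prems by (rule R_interval_bij_ends)
  have ab: "a \<le> b" and ab': "a' \<le> b'" using R_le[OF less.prems] by auto
  have "bij_betw f ({a..b} - {b}) ({a'..b'} - {b'})"
    using f ab by (intro bij_betw_DiffI) (auto simp: bij_betw_def)
  moreover have "{a..b} - {b} = {a..<b}" "{a'..b'} - {b'} = {a'..<b'}" by auto
  ultimately have bij: "bij_betw f {a..<b} {a'..<b'}" by simp
  have "(\<Sum>x\<in>{a..<b}. (mobius_left a x :: 'k)) = (\<Sum>x\<in>{a..<b}. mobius_left a' (f x))"
    using less.hyps f(2) card_atLeastAtMost_less_upper[OF locally_finite]
    by (intro sum.cong refl) fastforce
  also have "\<dots> = (\<Sum>y\<in>{a'..<b'}. mobius_left a' y)" by (rule sum.reindex_bij_betw[OF bij])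
  finally show ?case
    using ab ab' R_degenerate_iff[OF less.prems] by (simp add: mobius_left_rec[OF locally_finite])
qed

lemma left_inverse_zeta_cls:
  fixes \<Psi> :: "('a \<times> 'a) set \<Rightarrow> 'k::field"
  assumes inv: "\<forall>I\<in>classes R. inc_conv R \<Psi> zeta I = inc_unit I" and "a \<le> b"
  shows "\<Psi> (cls R a b) = mobius_left a b"
  using \<open>a \<le> b\<close>
proof (induction "card {a..b}" arbitrary: b rule: less_induct)
  case less
  have "{a..b} = insert b {a..<b}" using less.prems by auto
  moreover have "inc_conv R \<Psi> zeta (cls R a b) = inc_unit (cls R a b)"
    using inv cls_in_classes[OF less.prems] by blast
  ultimately have "\<Psi> (cls R a b) + (\<Sum>x\<in>{a..<b}. \<Psi> (cls R a x)) = (if a = b then 1 else 0)"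
    using less.prems by (simp add: inc_conv_cls inc_unit_def delta_cls_cls zeta_def)
  moreover have "(\<Sum>x\<in>{a..<b}. \<Psi> (cls R a x)) = (\<Sum>x\<in>{a..<b}. mobius_left a x)"
    using less.hyps card_atLeastAtMost_less_upper[OF locally_finite] by (intro sum.cong refl) auto
  ultimately have "\<Psi> (cls R a b) = (if a = b then 1 else 0) - (\<Sum>x\<in>{a..<b}. mobius_left a x)"
    by (simp add: eq_diff_eq)
  then show ?case
    using mobius_left_rec[OF locally_finite less.prems, where 'k='k] by (cases "a = b") simp_all
qed

definition is_zeta_inverse :: "(('a \<times> 'a) set \<Rightarrow> 'k::field) \<Rightarrow> bool" where
  "is_zeta_inverse \<Psi> \<longleftrightarrow> (\<forall>I. I \<notin> classes R \<longrightarrow> \<Psi> I = 0)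
     \<and> (\<forall>I\<in>classes R. inc_conv R \<Psi> zeta I = inc_unit I \<and> inc_conv R zeta \<Psi> I = inc_unit I)"

lemma is_zeta_inverse_unique:
  assumes "is_zeta_inverse \<Psi>" "is_zeta_inverse \<Phi>"
  shows "\<Psi> = \<Phi>"
proof
  fix I
  show "\<Psi> I = \<Phi> I"
  proof (cases "I \<in> classes R")
    case True
    then obtain a b where "a \<le> b" "I = cls R a b" by (rule classesE)
    then show ?thesis
      using assms left_inverse_zeta_cls[of \<Psi> a b] left_inverse_zeta_cls[of \<Phi> a b]
      by (simp add: is_zeta_inverse_def)
  next
    case False
    then show ?thesis using assms by (simp add: is_zeta_inverse_def)
  qed
qed

lemma is_zeta_inverse_exists: "\<exists>\<Phi> :: _ \<Rightarrow> 'k::field. is_zeta_inverse \<Phi>"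
proof
  define \<Phi> :: "('a \<times> 'a) set \<Rightarrow> 'k" where
    "\<Phi> I = (if I \<in> classes R then mobius_left (fst (rep I)) (snd (rep I)) else 0)" for I
  have \<Phi>_cls: "\<Phi> (cls R a b) = mobius_left a b" if "a \<le> b" for a b
    using that by (rule rep_cls) (simp add: \<Phi>_def cls_in_classes that mobius_left_R_invariant)
  have "inc_conv R \<Phi> zeta I = inc_unit I \<and> inc_conv R zeta \<Phi> I = inc_unit I"
    if "I \<in> classes R" for I
  proof -
    obtain a b where ab: "a \<le> b" "I = cls R a b" using \<open>I \<in> classes R\<close> by (rule classesE)
    have "(\<Sum>x\<in>{a..b}. \<Phi> (cls R a x)) = (\<Sum>x\<in>{a..b}. mobius_left a x)"
      using \<Phi>_cls by (intro sum.cong refl) auto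
    moreover have "(\<Sum>x\<in>{a..b}. \<Phi> (cls R x b)) = (\<Sum>x\<in>{a..b}. mobius_right x b)"
      using ab \<Phi>_cls by (intro sum.cong refl) (auto simp: mobius_left_eq_right[OF locally_finite])
    ultimately show ?thesis
      using ab by (simp add: inc_conv_cls inc_unit_def delta_cls_cls zeta_def
          sum_mobius_left[OF locally_finite] sum_mobius_right[OF locally_finite])
  qed
  then show "is_zeta_inverse \<Phi>" by (simp add: is_zeta_inverse_def \<Phi>_def)
qed

lemma is_zeta_inverse_mobius: "is_zeta_inverse (mobius R :: _ \<Rightarrow> 'k::field)"
proof -
  have "\<exists>!\<Psi> :: _ \<Rightarrow> 'k. is_zeta_inverse \<Psi>"
    using is_zeta_inverse_exists is_zeta_inverse_unique by blast
  then have "is_zeta_inverse (THE \<Psi> :: _ \<Rightarrow> 'k. is_zeta_inverse \<Psi>)"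
    by (rule theI')
  then show ?thesis unfolding mobius_def is_zeta_inverse_def .
qed

lemma sum_mobius_cls_left:
  "a \<le> b \<Longrightarrow> (\<Sum>x\<in>{a..b}. (mobius R (cls R a x) :: 'k::field)) = (if a = b then 1 else 0)"
  using is_zeta_inverse_mobius[where 'k='k] cls_in_classes[of a b]
  by (auto simp: is_zeta_inverse_def inc_conv_cls inc_unit_def delta_cls_cls zeta_def)

lemma sum_mobius_cls_right:
  "a \<le> b \<Longrightarrow> (\<Sum>x\<in>{a..b}. (mobius R (cls R x b) :: 'k::field)) = (if a = b then 1 else 0)"
  using is_zeta_inverse_mobius[where 'k='k] cls_in_classes[of a b]
  by (auto simp: is_zeta_inverse_def inc_conv_cls inc_unit_def delta_cls_cls zeta_def)

end

section \<open>The interval bialgebra\<close>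

lemma nabla_L_bas [simp]: "nabla_L R (bas (I,J)) = (mul_b R I J :: _ \<Rightarrow> 'k::field)"
  by (simp add: nabla_L_def)

lemma delta_L_bas [simp]: "delta_L R (bas I) = (comul_b R I :: _ \<Rightarrow> 'k::field)"
  by (simp add: delta_L_def)

text \<open>The counit, viewed as a linear map into the one-dimensional space with basis \<open>unit\<close>.\<close>

lemma eps_L_eq_linext: "eps_L R v = linext (\<lambda>I (_::unit). delta_cls I) v ()"
  by (simp add: eps_L_def linext_def)

lemma eps_L_bas [simp]: "eps_L R (bas I :: _ \<Rightarrow> 'k::field) = delta_cls I"
  by (simp add: eps_L_eq_linext)

context compatible_intervals
begin

text \<open>
  The unit class \<open>[[c,c]]\<close> does not depend on \<open>c\<close>; where no point is at hand, proofs take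
  \<open>c = undefined\<close>.
\<close>

lemma eta_L_eq: "eta_L R r = (\<lambda>I. r * bas (cls R c c) I)"
  unfolding eta_L_def by (subst cls_degenerate[of _ c]) (rule refl)

lemma eta_L_in_fvec: "(eta_L R r :: _ \<Rightarrow> 'k::field) \<in> fvec (classes R)"
  using cls_in_classes[of undefined undefined]
  by (auto simp: eta_L_eq[of r undefined] fvec_def supp_def bas_def)

lemma eps_L_eta_L: "eps_L R (eta_L R r) = (r :: 'k::field)"
  by (simp add: eta_L_eq[of _ undefined] eps_L_eq_linext linext_smult delta_cls_cls)

lemma lin_form_eps_L: "lin_form (fvec (classes R)) (eps_L R :: _ \<Rightarrow> 'k::field)"
  unfolding lin_form_def eps_L_eq_linext
  by (auto simp: fvec_def linext_add linext_smult)

lemma comul_b_in_fvec: "(comul_b R I :: _ \<Rightarrow> 'k::field) \<in> fvec (classes R \<times> classes R)"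
proof -
  obtain a b where r: "rep I = (a,b)" by force
  have "supp (\<lambda>p. \<Sum>x\<in>{a..b}. (bas (cls R a x, cls R x b) p :: 'k)) \<subseteq> classes R \<times> classes R"
    using supp_sum_subset[of "\<lambda>x. bas (cls R a x, cls R x b)" "{a..b}"] by (auto simp: cls_in_classes)
  then show ?thesis
    using finite_supp_sum_bas[of "{a..b}" "\<lambda>_. 1::'k" "\<lambda>x. (cls R a x, cls R x b)"]
    by (simp add: comul_b_def r fvec_def)
qed

lemma finite_supp_comul_b: "finite (supp (comul_b R I :: _ \<Rightarrow> 'k::field))"
  using comul_b_in_fvec by (auto simp: fvec_def)

lemma lin_on_delta_L:
  "lin_on (fvec (classes R)) (fvec (classes R \<times> classes R)) (delta_L R :: _ \<Rightarrow> _ \<Rightarrow> 'k::field)"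
  unfolding delta_L_def by (rule lin_on_linext) (rule comul_b_in_fvec)

lemma linext_delta_L:
  "finite (supp v) \<Longrightarrow> linext g (delta_L R v :: _ \<Rightarrow> 'k::field) = linext (\<lambda>I. linext g (comul_b R I)) v"
  unfolding delta_L_def by (rule linext_linext) (simp_all add: finite_supp_comul_b)

lemma tmap_delta_L:
  "finite (supp v) \<Longrightarrow> tmap F G (delta_L R v :: _ \<Rightarrow> 'k::field) = linext (\<lambda>I. tmap F G (comul_b R I)) v"
  unfolding tmap_def by (rule linext_delta_L)

lemma linext_cong_cls:
  assumes "v \<in> fvec (classes R)" and "\<And>a b. a \<le> b \<Longrightarrow> f (cls R a b) = g (cls R a b)"
  shows "linext f v = linext g v"
  using assms by (intro linext_cong) (auto simp: fvec_def elim!: classesE)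

lemma delta_L_eta_L: "(delta_L R (eta_L R r) :: _ \<Rightarrow> 'k::field) = (\<lambda>p. r * tens (eta_L R 1) (eta_L R 1) p)"
  by (simp add: eta_L_eq[of _ undefined] delta_L_def linext_smult comul_b_cls)

lemma coassoc_comul_b_cls:
  assumes "a \<le> b"
  shows "assoc_r (tmap (delta_L R) id (comul_b R (cls R a b)))
    = (tmap id (delta_L R) (comul_b R (cls R a b)) :: _ \<Rightarrow> 'k::field)"
proof -
  have "(tmap (delta_L R) id (comul_b R (cls R a b)) :: _ \<Rightarrow> 'k)
      = (\<lambda>q. \<Sum>x\<in>{a..b}. \<Sum>y\<in>{a..x}. bas ((cls R a y, cls R y x), cls R x b) q)"
    using assms by (simp add: comul_b_cls tmap_def linext_sum_bas1 tens_sum_bas_left)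
  then have "assoc_r (tmap (delta_L R) id (comul_b R (cls R a b)))
      = (\<lambda>q. \<Sum>x\<in>{a..b}. \<Sum>y\<in>{a..x}. (bas (cls R a y, cls R y x, cls R x b) q :: 'k))"
    by (auto simp: assoc_r_def bas_def intro!: sum.cong)
  also have "\<dots> = (\<lambda>q. \<Sum>y\<in>{a..b}. \<Sum>x\<in>{y..b}. bas (cls R a y, cls R y x, cls R x b) q)"
  proof
    fix q
    let ?t = "\<lambda>y x. (bas (cls R a y, cls R y x, cls R x b) q :: 'k)"
    have "(\<Sum>x\<in>{a..b}. \<Sum>y\<in>{a..x}. ?t y x) = (\<Sum>x\<in>{a..b}. \<Sum>y\<in>{y\<in>{a..b}. y \<le> x}. ?t y x)"
      by (intro sum.cong refl) (auto intro: order.trans)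
    also have "\<dots> = (\<Sum>y\<in>{a..b}. \<Sum>x\<in>{x\<in>{a..b}. y \<le> x}. ?t y x)"
      by (rule sum.swap_restrict) auto
    also have "\<dots> = (\<Sum>y\<in>{a..b}. \<Sum>x\<in>{y..b}. ?t y x)"
      by (intro sum.cong refl) (auto intro: order.trans)
    finally show "(\<Sum>x\<in>{a..b}. \<Sum>y\<in>{a..x}. ?t y x) = (\<Sum>y\<in>{a..b}. \<Sum>x\<in>{y..b}. ?t y x)" .
  qed
  also have "\<dots> = tmap id (delta_L R) (comul_b R (cls R a b))"
    using assms by (simp add: comul_b_cls tmap_def linext_sum_bas1 tens_sum_bas_right)
  finally show ?thesis .
qed

lemma coassoc_delta_L:
  assumes "v \<in> fvec (classes R)"
  shows "assoc_r (tmap (delta_L R) id (delta_L R v)) = (tmap id (delta_L R) (delta_L R v) :: _ \<Rightarrow> 'k::field)"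
proof -
  have fin: "finite (supp v)" using assms by (simp add: fvec_def)
  have "assoc_r (tmap (delta_L R) id (delta_L R v))
      = linext (\<lambda>I. assoc_r (tmap (delta_L R) id (comul_b R I) :: _ \<Rightarrow> 'k)) v"
    by (simp only: tmap_delta_L[OF fin] assoc_r_linext)
  also have "\<dots> = linext (\<lambda>I. tmap id (delta_L R) (comul_b R I)) v"
    by (rule linext_cong_cls[OF assms]) (rule coassoc_comul_b_cls)
  also have "\<dots> = tmap id (delta_L R) (delta_L R v)"
    by (simp only: tmap_delta_L[OF fin])
  finally show ?thesis .
qed

lemma sum_delta_cls_left:
  assumes "a \<le> b"
  shows "(\<Sum>x\<in>{a..b}. (delta_cls (cls R a x) :: 'k::field) * f x) = f a"
proof -
  have "(\<Sum>x\<in>{a..b}. (delta_cls (cls R a x) :: 'k) * f x) = (\<Sum>x\<in>{a..b}. if x = a then f x else 0)"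
    by (intro sum.cong refl) (auto simp: delta_cls_cls)
  then show ?thesis using assms by simp
qed

lemma sum_delta_cls_right:
  assumes "a \<le> b"
  shows "(\<Sum>x\<in>{a..b}. (delta_cls (cls R x b) :: 'k::field) * f x) = f b"
proof -
  have "(\<Sum>x\<in>{a..b}. (delta_cls (cls R x b) :: 'k) * f x) = (\<Sum>x\<in>{a..b}. if x = b then f x else 0)"
    by (intro sum.cong refl) (auto simp: delta_cls_cls)
  then show ?thesis using assms by simp
qed

lemma counit_comul_b_cls:
  assumes "a \<le> b"
  shows "linext (\<lambda>(i,j) k. eps_L R (bas i) * bas j k) (comul_b R (cls R a b)) = (bas (cls R a b) :: _ \<Rightarrow> 'k::field)"
    and "linext (\<lambda>(i,j) k. eps_L R (bas j) * bas i k) (comul_b R (cls R a b)) = (bas (cls R a b) :: _ \<Rightarrow> 'k)"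
  using assms by (simp_all add: comul_b_cls linext_sum_bas1 sum_delta_cls_left sum_delta_cls_right)

lemma counit_delta_L:
  assumes "v \<in> fvec (classes R)"
  shows "linext (\<lambda>(i,j) k. eps_L R (bas i) * bas j k) (delta_L R v) = (v :: _ \<Rightarrow> 'k::field)"
    and "linext (\<lambda>(i,j) k. eps_L R (bas j) * bas i k) (delta_L R v) = v"
proof -
  have fin: "finite (supp v)" using assms by (simp add: fvec_def)
  have "linext g (delta_L R v) = v"
    if "\<And>a b. a \<le> b \<Longrightarrow> linext g (comul_b R (cls R a b)) = (bas (cls R a b) :: _ \<Rightarrow> 'k)" for g
  proof -
    have "linext g (delta_L R v) = linext bas v"
      unfolding linext_delta_L[OF fin] by (rule linext_cong_cls[OF assms]) (rule that)
    then show ?thesis by (simp add: linext_bas_self[OF fin])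
  qed
  then show "linext (\<lambda>(i,j) k. eps_L R (bas i) * bas j k) (delta_L R v) = v"
    and "linext (\<lambda>(i,j) k. eps_L R (bas j) * bas i k) (delta_L R v) = v"
    using counit_comul_b_cls by blast+
qed

end

locale concatenating_intervals = compatible_intervals R
  for R :: "(('a::order \<times> 'a) \<times> ('a \<times> 'a)) set" +
  fixes field :: "'k::field itself"
  assumes nabla_L_concat: "\<And>a x b. a \<le> x \<Longrightarrow> x \<le> b \<Longrightarrow>
    (nabla_L R (tens (bas (cls R a x)) (bas (cls R x b))) :: _ \<Rightarrow> 'k) = bas (cls R a b)"
begin

lemma mul_b_cls: "a \<le> x \<Longrightarrow> x \<le> b \<Longrightarrow> (mul_b R (cls R a x) (cls R x b) :: _ \<Rightarrow> 'k) = bas (cls R a b)"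
  using nabla_L_concat by simp

lemma mul_b_cases:
  obtains "(mul_b R I J :: _ \<Rightarrow> 'k) = (\<lambda>_. 0)"
    and "\<nexists>a x b. a \<le> x \<and> x \<le> b \<and> I = cls R a x \<and> J = cls R x b"
  | a x b where "a \<le> x" "x \<le> b" "I = cls R a x" "J = cls R x b"
    and "(mul_b R I J :: _ \<Rightarrow> 'k) = bas (cls R a b)"
proof (cases "\<exists>a x b. a \<le> x \<and> x \<le> b \<and> I = cls R a x \<and> J = cls R x b")
  case True
  then show ?thesis using that(2) mul_b_cls by blast
next
  case False
  moreover have "(mul_b R I J :: _ \<Rightarrow> 'k) = (\<lambda>_. 0)"
    unfolding mul_b_def using False by (rule if_not_P)
  ultimately show ?thesis using that(1) by blast
qed

lemma mul_b_unit_left: "a \<le> b \<Longrightarrow> (mul_b R (cls R c c) (cls R a b) :: _ \<Rightarrow> 'k) = bas (cls R a b)"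
  using mul_b_cls[of a a b] by (simp add: cls_degenerate[of c a])

lemma mul_b_unit_right: "a \<le> b \<Longrightarrow> (mul_b R (cls R a b) (cls R c c) :: _ \<Rightarrow> 'k) = bas (cls R a b)"
  using mul_b_cls[of a b b] by (simp add: cls_degenerate[of c b])

lemma mul_b_in_fvec: "(mul_b R I J :: _ \<Rightarrow> 'k) \<in> fvec (classes R)"
proof (cases rule: mul_b_cases[of I J])
  case 1
  then show ?thesis by (simp add: fvec_def supp_def)
next
  case (2 a x b)
  then show ?thesis by (simp add: fvec_def cls_in_classes order.trans[of a x b])
qed

lemma finite_supp_mul_b: "finite (supp (mul_b R I J :: _ \<Rightarrow> 'k))"
  using mul_b_in_fvec by (simp add: fvec_def)

lemma lin_on_nabla_L:
  "lin_on (fvec (classes R \<times> classes R)) (fvec (classes R)) (nabla_L R :: _ \<Rightarrow> _ \<Rightarrow> 'k)"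
  unfolding nabla_L_def by (rule lin_on_linext) (auto simp: mul_b_in_fvec)

lemma nabla_L_linext:
  "finite (supp v) \<Longrightarrow> (\<And>i. i \<in> supp v \<Longrightarrow> finite (supp (f i))) \<Longrightarrow>
    (nabla_L R (linext f v) :: _ \<Rightarrow> 'k) = linext (\<lambda>i. nabla_L R (f i)) v"
  unfolding nabla_L_def by (rule linext_linext)

lemma nabla_L_mul_b_left_nonzero:
  assumes "(nabla_L R (tens (mul_b R I J) (bas K)) :: _ \<Rightarrow> 'k) \<noteq> (\<lambda>_. 0)"
  shows "\<exists>a x y b. a \<le> x \<and> x \<le> y \<and> y \<le> b \<and> I = cls R a x \<and> J = cls R x y \<and> K = cls R y b"
proof (cases rule: mul_b_cases[of I J])
  case 1
  then show ?thesis using assms by (simp add: nabla_L_def)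
next
  case (2 a x y)
  then have "(mul_b R (cls R a y) K :: _ \<Rightarrow> 'k) \<noteq> (\<lambda>_. 0)" using assms by simp
  then obtain a' y' b where "a' \<le> y'" "y' \<le> b" "cls R a y = cls R a' y'" "K = cls R y' b"
    by (cases rule: mul_b_cases[of "cls R a y" K]) auto
  moreover obtain x' where "a' \<le> x'" "x' \<le> y'" "cls R a x = cls R a' x'" "cls R x y = cls R x' y'"
    using cls_split_transport[OF \<open>cls R a y = cls R a' y'\<close> \<open>a \<le> x\<close> \<open>x \<le> y\<close>] .
  ultimately show ?thesis using 2 by blast
qed

lemma nabla_L_mul_b_right_nonzero:
  assumes "(nabla_L R (tens (bas I) (mul_b R J K)) :: _ \<Rightarrow> 'k) \<noteq> (\<lambda>_. 0)"
  shows "\<exists>a x y b. a \<le> x \<and> x \<le> y \<and> y \<le> b \<and> I = cls R a x \<and> J = cls R x y \<and> K = cls R y b"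
proof (cases rule: mul_b_cases[of J K])
  case 1
  then show ?thesis using assms by (simp add: tens_def nabla_L_def linext_def supp_def)
next
  case (2 x y b)
  then have "(mul_b R I (cls R x b) :: _ \<Rightarrow> 'k) \<noteq> (\<lambda>_. 0)" using assms by simp
  then obtain a x' b' where "a \<le> x'" "x' \<le> b'" "I = cls R a x'" "cls R x b = cls R x' b'"
    by (cases rule: mul_b_cases[of I "cls R x b"]) auto
  moreover obtain y' where "x' \<le> y'" "y' \<le> b'" "cls R x y = cls R x' y'" "cls R y b = cls R y' b'"
    using cls_split_transport[OF \<open>cls R x b = cls R x' b'\<close> \<open>x \<le> y\<close> \<open>y \<le> b\<close>] .
  ultimately show ?thesis using 2 by blast
qed

lemma nabla_L_assoc_bas:
  "(nabla_L R (tens (mul_b R I J) (bas K)) :: _ \<Rightarrow> 'k) = nabla_L R (tens (bas I) (mul_b R J K))"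
proof (cases "\<exists>a x y b. a \<le> x \<and> x \<le> y \<and> y \<le> b \<and> I = cls R a x \<and> J = cls R x y \<and> K = cls R y b")
  case True
  then obtain a x y b where "a \<le> x" "x \<le> y" "y \<le> b" "I = cls R a x" "J = cls R x y" "K = cls R y b"
    by blast
  then show ?thesis by (simp add: mul_b_cls order.trans[of a x y] order.trans[of x y b])
next
  case False
  then show ?thesis using nabla_L_mul_b_left_nonzero nabla_L_mul_b_right_nonzero by metis
qed

lemma nabla_L_assoc:
  assumes "t \<in> fvec (classes R \<times> classes R \<times> classes R)"
  shows "(nabla_L R (tmap (nabla_L R) id (assoc_l t)) :: _ \<Rightarrow> 'k) = nabla_L R (tmap id (nabla_L R) t)"
proof -
  have fin: "finite (supp t)" using assms by (simp add: fvec_def)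
  have "tmap (nabla_L R) id (assoc_l t) = linext (\<lambda>(I,J,K). tens (mul_b R I J :: _ \<Rightarrow> 'k) (bas K)) t"
    unfolding assoc_l_eq_linext[OF fin] tmap_def
    by (subst linext_linext[OF fin]) (auto simp: tmap_def split: prod.splits intro!: linext_cong)
  moreover have "tmap id (nabla_L R) t = linext (\<lambda>(I,J,K). tens (bas I) (mul_b R J K :: _ \<Rightarrow> 'k)) t"
    unfolding tmap_def by (rule linext_cong) (auto split: prod.splits)
  ultimately show ?thesis
    using fin by (simp add: nabla_L_linext finite_supp_mul_b finite_supp_tens nabla_L_assoc_bas
        split_def del: nabla_L_bas)
qed

lemma nabla_L_unit:
  assumes "v \<in> fvec (classes R)"
  shows "nabla_L R (tens (eta_L R 1) v) = (v :: _ \<Rightarrow> 'k)"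
    and "nabla_L R (tens v (eta_L R 1)) = (v :: _ \<Rightarrow> 'k)"
proof -
  fix c :: 'a
  have fin: "finite (supp v)" using assms by (simp add: fvec_def)
  have "nabla_L R (tens (eta_L R 1) v) = linext (\<lambda>J. mul_b R (cls R c c) J) v"
    by (simp add: eta_L_eq[of _ c] tens_bas_left_eq_linext[OF fin] nabla_L_linext[OF fin])
  also have "\<dots> = linext bas v"
    by (rule linext_cong_cls[OF assms]) (rule mul_b_unit_left)
  finally show "nabla_L R (tens (eta_L R 1) v) = v" by (simp add: linext_bas_self[OF fin])
  have "nabla_L R (tens v (eta_L R 1)) = linext (\<lambda>J. mul_b R J (cls R c c)) v"
    by (simp add: eta_L_eq[of _ c] tens_bas_right_eq_linext[OF fin] nabla_L_linext[OF fin])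
  also have "\<dots> = linext bas v"
    by (rule linext_cong_cls[OF assms]) (rule mul_b_unit_right)
  finally show "nabla_L R (tens v (eta_L R 1)) = v" by (simp add: linext_bas_self[OF fin])
qed

lemma eps_L_mul_b:
  assumes "I \<in> classes R" "J \<in> classes R"
  shows "eps_L R (mul_b R I J :: _ \<Rightarrow> 'k) = delta_cls I * delta_cls J"
proof -
  obtain a b c d where ab: "a \<le> b" "I = cls R a b" and cd: "c \<le> d" "J = cls R c d"
    using assms by (meson classesE)
  show ?thesis
  proof (cases rule: mul_b_cases[of I J])
    case 1
    then have "\<not> (a = b \<and> c = d)" using ab cd cls_degenerate by blast
    then show ?thesis using 1 ab cd by (auto simp: delta_cls_cls eps_L_def supp_def)
  next
    case (2 a x b)
    then show ?thesis by (auto simp: delta_cls_cls order.trans[of a x b] intro: order.antisym)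
  qed
qed

lemma eps_L_nabla_L:
  assumes "w \<in> fvec (classes R \<times> classes R)"
  shows "eps_L R (nabla_L R w :: _ \<Rightarrow> 'k) = (\<Sum>p\<in>supp w. w p * eps_L R (bas (fst p)) * eps_L R (bas (snd p)))"
proof -
  have fin: "finite (supp w)" using assms by (simp add: fvec_def)
  have "eps_L R (nabla_L R w :: _ \<Rightarrow> 'k) = (\<Sum>p\<in>supp w. w p * eps_L R (mul_b R (fst p) (snd p) :: _ \<Rightarrow> 'k))"
    unfolding eps_L_eq_linext nabla_L_def
    by (subst linext_linext[OF fin]) (auto simp: finite_supp_mul_b linext_def split_def)
  also have "\<dots> = (\<Sum>p\<in>supp w. w p * eps_L R (bas (fst p)) * eps_L R (bas (snd p)))"
    using assms by (intro sum.cong refl) (auto simp: fvec_def eps_L_mul_b)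
  finally show ?thesis .
qed

theorem interval_mweak_bialgebra:
  "mweak_bialgebra (classes R) (nabla_L R) (eta_L R) (delta_L R) (eps_L R :: _ \<Rightarrow> 'k)"
proof -
  have "eta_L R (r + s) = (\<lambda>i. eta_L R r i + eta_L R s i)"
    and "eta_L R (r * s) = (\<lambda>i. r * eta_L R s i)" for r s :: 'k
    by (simp_all add: eta_L_eq[of _ undefined] distrib_right mult.assoc)
  then show ?thesis
    unfolding mweak_bialgebra_def
    using lin_on_nabla_L nabla_L_assoc nabla_L_unit eps_L_nabla_L
      lin_on_delta_L[where 'k='k] lin_form_eps_L[where 'k='k] eta_L_in_fvec[where 'k='k]
      coassoc_delta_L[where 'k='k] counit_delta_L[where 'k='k] delta_L_eta_L[where 'k='k]
      eps_L_eta_L[where 'k='k]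
    by blast
qed

end

section \<open>The antipode\<close>

lemma hatmu_bas: "hatmu R (bas I) = (\<lambda>J. (mobius R I :: 'k::field) * bas I J)"
  by (simp add: hatmu_def)

lemma lin_on_hatmu: "lin_on (fvec (classes R)) (fvec (classes R)) (hatmu R :: _ \<Rightarrow> _ \<Rightarrow> 'k::field)"
  unfolding hatmu_def
  by (rule lin_on_linext) (auto simp: fvec_def supp_def bas_def)

context compatible_intervals
begin

lemma eta_L_eps_L_eq_linext:
  "eta_L R (eps_L R v) = linext (\<lambda>I K. (delta_cls I :: 'k::field) * bas (cls R c c) K) v"
  by (auto simp: eta_L_eq[of _ c] eps_L_def linext_def sum_distrib_right mult.assoc)

lemma tmap_hatmu_id_comul_b_cls:
  "a \<le> b \<Longrightarrow> tmap (hatmu R) id (comul_b R (cls R a b))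
    = (\<lambda>q. \<Sum>x\<in>{a..b}. (mobius R (cls R a x) :: 'k::field) * bas (cls R a x, cls R x b) q)"
  by (simp add: comul_b_cls tmap_def linext_sum_bas1 hatmu_bas tens_smult_bas_left)

lemma tmap_id_hatmu_comul_b_cls:
  "a \<le> b \<Longrightarrow> tmap id (hatmu R) (comul_b R (cls R a b))
    = (\<lambda>q. \<Sum>x\<in>{a..b}. (mobius R (cls R x b) :: 'k::field) * bas (cls R a x, cls R x b) q)"
  by (simp add: comul_b_cls tmap_def linext_sum_bas1 hatmu_bas tens_smult_bas_right)

end

context concatenating_intervals
begin

lemma nabla_L_sum_splits:
  assumes "a \<le> b"
  shows "nabla_L R (\<lambda>q. \<Sum>x\<in>{a..b}. c x * bas (cls R a x, cls R x b) q)
    = (\<lambda>K. (\<Sum>x\<in>{a..b}. c x) * (bas (cls R a b) K :: 'k))"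
  using assms by (simp add: nabla_L_def linext_sum_bas mul_b_cls sum_distrib_right)

lemma conv_eq_eta_eps:
  assumes v: "v \<in> fvec (classes R)"
    and splits: "\<And>a b. a \<le> b \<Longrightarrow>
      tmap F G (comul_b R (cls R a b)) = (\<lambda>q. \<Sum>x\<in>{a..b}. w a b x * bas (cls R a x, cls R x b) q)"
    and weights: "\<And>a b. a \<le> b \<Longrightarrow> (\<Sum>x\<in>{a..b}. w a b x) = (if a = b then 1 else 0 :: 'k)"
  shows "conv (nabla_L R) (delta_L R) F G v = eta_L R (eps_L R v)"
proof -
  fix c :: 'a
  have fin: "finite (supp v)" using v by (simp add: fvec_def)
  have "finite (supp (tmap F G (comul_b R I)))" if "I \<in> supp v" for I
    using that v splits by (auto simp: fvec_def finite_supp_sum_bas elim!: classesE)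
  then have "conv (nabla_L R) (delta_L R) F G v = linext (\<lambda>I. nabla_L R (tmap F G (comul_b R I))) v"
    unfolding conv_def by (simp add: tmap_delta_L[OF fin] nabla_L_linext[OF fin])
  also have "\<dots> = linext (\<lambda>I K. delta_cls I * bas (cls R c c) K) v"
  proof (rule linext_cong_cls[OF v])
    fix a b :: 'a
    assume "a \<le> b"
    then show "nabla_L R (tmap F G (comul_b R (cls R a b))) = (\<lambda>K. delta_cls (cls R a b) * bas (cls R c c) K)"
      by (auto simp: splits nabla_L_sum_splits weights delta_cls_cls cls_degenerate[of b c])
  qed
  also have "\<dots> = eta_L R (eps_L R v)"
    by (rule eta_L_eps_L_eq_linext[symmetric])
  finally show ?thesis .
qed

theorem hatmu_is_antipode:
  "is_antipode (classes R) (nabla_L R) (eta_L R) (delta_L R) (eps_L R) (hatmu R :: _ \<Rightarrow> _ \<Rightarrow> 'k)"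
  unfolding is_antipode_def
  using lin_on_hatmu conv_eq_eta_eps[OF _ tmap_hatmu_id_comul_b_cls sum_mobius_cls_left]
    conv_eq_eta_eps[OF _ tmap_id_hatmu_comul_b_cls sum_mobius_cls_right]
  by blast

end

theorem corollary7p5:
  fixes R :: "(('a::order \<times> 'a) \<times> ('a \<times> 'a)) set"
  assumes "countable (UNIV :: 'a set)"
    and "locally_finite TYPE('a)"
    and "bialg_compatible R"
    and "\<forall>a x b :: 'a. a \<le> x \<and> x \<le> b \<longrightarrow>
           (nabla_L R (tens (bas (cls R a x)) (bas (cls R x b))) :: ('a \<times> 'a) set \<Rightarrow> 'k::field)
             = bas (cls R a b)"
  shows "mweak_hopf (classes R) (nabla_L R) (eta_L R) (delta_L R) (eps_L R :: (('a \<times> 'a) set \<Rightarrow> 'k) \<Rightarrow> 'k)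
       \<and> is_antipode (classes R) (nabla_L R) (eta_L R) (delta_L R) (eps_L R) (hatmu R :: (('a \<times> 'a) set \<Rightarrow> 'k) \<Rightarrow> _)"
proof -
  interpret concatenating_intervals R "TYPE('k)"
    using assms(2-4) by unfold_locales blast+
  show ?thesis
    unfolding mweak_hopf_def using interval_mweak_bialgebra hatmu_is_antipode by blast
qed

end
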